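(* In the setting described in the context, let $X\in\mathcal{K}(\mathbb{R}^n)$ satisfy $X\cap\mathcal{D}_{\mathcal{A}}=\emptyset$, and let $(X_k)_{k\in\mathbb{Z}_+}\subset\mathcal{K}(\mathbb{R}^n)$ converge to $X$ in the Hausdorff distance. Then $\lim_{k\to\infty}\mathcal{V}(X_k)=\infty$.
   Context: Let $\|\cdot\|$ be a norm on $\mathbb{R}^n$ and $\mathrm{dist}(x,\Omega):=\inf_{y\in\Omega}\|x-y\|$. Let $\mathcal{K}(\mathbb{R}^n)$ denote the nonempty compact subsets of $\mathbb{R}^n$, with Hausdorff distance $d_H(X,Y):=\max\{\sup_{x\in X}\mathrm{dist}(x,Y),\sup_{y\in Y}\mathrm{dist}(y,X)\}$. Consider $x_{k+1}=f(x_k,u_k)$ with $f:\mathbb{R}^n\times\mathbb{R}^m\to\mathbb{R}^n$ continuous and inputs $u_k\in U$, $U\subset\mathbb{R}^m$ nonempty compact. For $x\in\mathbb{R}^n$ and $\pi:\mathbb{Z}_+\to U$, $\varphi_x^\pi(0)=x$, $\varphi_x^\pi(k+1)=f(\varphi_x^\pi(k),\pi(k))$; $\mathcal{R}(X,k):=\{\varphi_x^\pi(k):x\in X,\pi\in U^{\mathbb{Z}_+}\}$. Let $\mathcal{A}\in\mathcal{K}(\mathbb{R}^n)$ be controlled invariant. Assume local $\ell_p$-stabilizability: there exist $r>0$, $M\ge1$, $p>0$, $\lambda:[0,r]\times\mathbb{Z}_+\to\mathbb{R}_+$ such that (1) for each $k$, $s\mapsto\lambda(s,k)$ is continuous, nondecreasing,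 $\lambda(0,k)=0$; for each $s$, $k\mapsto\lambda(s,k)$ is nonincreasing, $\lambda(s,0)\le s$; (2) $\sum_{k}\lambda(r,k)^p<\infty$; (3) for every $x$ with $\mathrm{dist}(x,\mathcal{A})\le r$ there is $\pi\in U^{\mathbb{Z}_+}$ with $\mathrm{dist}(\varphi_x^\pi(k),\mathcal{A})\le M\lambda(\mathrm{dist}(x,\mathcal{A}),k)$ for all $k$. Let $\mathcal{D}_{\mathcal{A}}:=\{x:\exists\pi\in U^{\mathbb{Z}_+},\ \lim_{k\to\infty}\mathrm{dist}(\varphi_x^\pi(k),\mathcal{A})=0\}$. Let $\alpha:\mathbb{R}^n\to\mathbb{R}_+$ be continuous with $\underline{\alpha}\,\mathrm{dist}(x,\mathcal{A})^{\bar p}\le\alpha(x)\le\overline{\alpha}\,\mathrm{dist}(x,\mathcal{A})^{\bar p}$, constants $\underline{\alpha},\overline{\alpha}>0$, $\bar p\ge p$. Define $\Psi(X):=\inf_{y\in X}\alpha(y)$ and $\mathcal{V}(X):=\sum_{k=0}^\infty\Psi(\mathcal{R}(X,k))\in[0,\infty]$. *)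

theory Defs
  imports "HOL-Analysis.Analysis"
begin

text \<open>State space: a real normed vector space with the Heine-Borel property,
  i.e. a finite-dimensional normed space; this is R^n equipped with an
  arbitrary norm. dist(x, Omega) is the library's infdist.\<close>

definition hausd :: "'a::metric_space set \<Rightarrow> 'a set \<Rightarrow> real" where
  "hausd X Y = max (SUP x\<in>X. infdist x Y) (SUP y\<in>Y. infdist y X)"

primrec traj :: "('a \<Rightarrow> 'b \<Rightarrow> 'a) \<Rightarrow> 'a \<Rightarrow> (nat \<Rightarrow> 'b) \<Rightarrow> nat \<Rightarrow> 'a" where
  "traj f x \<pi> 0 = x"
| "traj f x \<pi> (Suc k) = f (traj f x \<pi> k) (\<pi> k)"

definition reach :: "('a \<Rightarrow> 'b \<Rightarrow> 'a) \<Rightarrow> 'b set \<Rightarrow> 'a set \<Rightarrow> nat \<Rightarrow> 'a set" where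
  "reach f U X k = {traj f x \<pi> k | x \<pi>. x \<in> X \<and> (\<forall>j. \<pi> j \<in> U)}"

definition controlled_invariant :: "('a \<Rightarrow> 'b \<Rightarrow> 'a) \<Rightarrow> 'b set \<Rightarrow> 'a set \<Rightarrow> bool" where
  "controlled_invariant f U A \<longleftrightarrow> (\<forall>x\<in>A. \<exists>u\<in>U. f x u \<in> A)"

definition locally_lp_stabilizable ::
  "('a::metric_space \<Rightarrow> 'b \<Rightarrow> 'a) \<Rightarrow> 'b set \<Rightarrow> 'a set \<Rightarrow> real \<Rightarrow> real \<Rightarrow> real
     \<Rightarrow> (real \<Rightarrow> nat \<Rightarrow> real) \<Rightarrow> bool" where
  "locally_lp_stabilizable f U A r M p lam \<longleftrightarrow>
     r > 0 \<and> M \<ge> 1 \<and> p > 0 \<and>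
     (\<forall>s\<in>{0..r}. \<forall>k. lam s k \<ge> 0) \<and>
     (\<forall>k. continuous_on {0..r} (\<lambda>s. lam s k) \<and> mono_on {0..r} (\<lambda>s. lam s k) \<and> lam 0 k = 0) \<and>
     (\<forall>s\<in>{0..r}. antimono (\<lambda>k. lam s k) \<and> lam s 0 \<le> s) \<and>
     summable (\<lambda>k. lam r k powr p) \<and>
     (\<forall>x. infdist x A \<le> r \<longrightarrow>
        (\<exists>\<pi>. (\<forall>j. \<pi> j \<in> U) \<and>
             (\<forall>k. infdist (traj f x \<pi> k) A \<le> M * lam (infdist x A) k)))"

definition DA :: "('a::metric_space \<Rightarrow> 'b \<Rightarrow> 'a) \<Rightarrow> 'b set \<Rightarrow> 'a set \<Rightarrow> 'a set" where
  "DA f U A = {x. \<exists>\<pi>. (\<forall>j. \<pi> j \<in> U) \<and> (\<lambda>k. infdist (traj f x \<pi> k) A) \<longlonglongrightarrow> 0}"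

definition Psi :: "('a \<Rightarrow> real) \<Rightarrow> 'a set \<Rightarrow> real" where
  "Psi \<alpha> X = (INF y\<in>X. \<alpha> y)"

definition Vfun :: "('a \<Rightarrow> real) \<Rightarrow> ('a \<Rightarrow> 'b \<Rightarrow> 'a) \<Rightarrow> 'b set \<Rightarrow> 'a set \<Rightarrow> ennreal" where
  "Vfun \<alpha> f U X = (\<Sum>k. ennreal (Psi \<alpha> (reach f U X k)))"

end

theory Submission
  imports Defs
begin

text \<open>A trajectory issued from \<open>X\<close> never comes within distance \<open>r\<close> of \<open>A\<close>: from such a
  point the stabilizing input would steer it into \<open>A\<close>, contradicting \<open>X \<inter> DA f U A = {}\<close>.
  Trajectories depend continuously on the initial state, uniformly over the compact input set,
  so for every fixed time \<open>j\<close> the reachable sets \<open>reach f U (Xs n) j\<close> eventually lie within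
  \<open>r/2\<close> of \<open>reach f U X j\<close>, hence at distance at least \<open>r/2\<close> from \<open>A\<close>. Thus each term of
  the series \<open>Vfun \<alpha> f U (Xs n)\<close> is eventually at least \<open>alo * (r/2) powr pbar > 0\<close>, and
  its partial sums grow without bound.\<close>

lemma traj_cong: "(\<forall>i<k. \<pi> i = \<pi>' i) \<Longrightarrow> traj f x \<pi> k = traj f x \<pi>' k"
  by (induction k) auto

lemma traj_add: "traj f x \<pi> (j + k) = traj f (traj f x \<pi> j) (\<lambda>i. \<pi> (j + i)) k"
  by (induction k) auto

lemma reach_0:
  assumes "U \<noteq> {}" shows "reach f U C 0 = C"
proof -
  obtain u where "u \<in> U" using assms by blast
  then show ?thesis unfolding reach_def by (auto intro!: exI[of _ "\<lambda>_. u"])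
qed

lemma reach_Suc: "reach f U C (Suc j) = (\<lambda>(x, u). f x u) ` (reach f U C j \<times> U)"
proof
  show "reach f U C (Suc j) \<subseteq> (\<lambda>(x, u). f x u) ` (reach f U C j \<times> U)"
  proof
    fix z assume "z \<in> reach f U C (Suc j)"
    then obtain x \<pi> where z: "z = traj f x \<pi> (Suc j)" "x \<in> C" "\<forall>i. \<pi> i \<in> U"
      unfolding reach_def by blast
    then have "(traj f x \<pi> j, \<pi> j) \<in> reach f U C j \<times> U" unfolding reach_def by blast
    then show "z \<in> (\<lambda>(x, u). f x u) ` (reach f U C j \<times> U)"
      using z(1) by (auto intro: rev_image_eqI)
  qed
next
  show "(\<lambda>(x, u). f x u) ` (reach f U C j \<times> U) \<subseteq> reach f U C (Suc j)"
  proof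
    fix z assume "z \<in> (\<lambda>(x, u). f x u) ` (reach f U C j \<times> U)"
    then obtain x \<pi> u where z: "z = f (traj f x \<pi> j) u" "x \<in> C" "\<forall>i. \<pi> i \<in> U" "u \<in> U"
      unfolding reach_def by auto
    have "traj f x (\<pi>(j := u)) j = traj f x \<pi> j" by (rule traj_cong) auto
    then have "z = traj f x (\<pi>(j := u)) (Suc j)" using z by simp
    moreover have "\<forall>i. (\<pi>(j := u)) i \<in> U" using z by auto
    ultimately show "z \<in> reach f U C (Suc j)" unfolding reach_def using z by blast
  qed
qed

lemma traj_in_reach: "x \<in> C \<Longrightarrow> \<forall>i. \<pi> i \<in> U \<Longrightarrow> traj f x \<pi> j \<in> reach f U C j"
  unfolding reach_def by blast

lemma reach_ne:
  assumes "U \<noteq> {}" "C \<noteq> {}" shows "reach f U C j \<noteq> {}"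
proof -
  obtain u x where "u \<in> U" "x \<in> C" using assms by blast
  then show ?thesis using traj_in_reach[of x C "\<lambda>_. u" U f j] by blast
qed

lemma compact_reach:
  assumes "continuous_on UNIV (\<lambda>(x, u). f x u)" "compact U" "U \<noteq> {}" "compact C"
  shows "compact (reach f U C j)"
proof (induction j)
  case 0 then show ?case using assms reach_0 by metis
next
  case (Suc j)
  show ?case unfolding reach_Suc
    by (rule compact_continuous_image[OF continuous_on_subset[OF assms(1)]])
       (auto intro: compact_Times Suc assms)
qed

lemma uniformly_continuous_near_compact:
  fixes f :: "'a::heine_borel \<Rightarrow> 'b::metric_space \<Rightarrow> 'c::metric_space"
  assumes f: "continuous_on UNIV (\<lambda>(x, u). f x u)" and "compact C" "compact U" "e > 0"
  obtains d where "d > 0"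
    "\<And>y c u. c \<in> C \<Longrightarrow> u \<in> U \<Longrightarrow> dist y c < d \<Longrightarrow> dist (f y u) (f c u) < e"
proof (cases "C = {}")
  case False
  define N where "N = {x. infdist x C \<le> 1}"
  have "compact (N \<times> U)"
    unfolding N_def using False assms by (intro compact_Times compact_infdist_le) auto
  then have "uniformly_continuous_on (N \<times> U) (\<lambda>(x, u). f x u)"
    by (rule compact_uniformly_continuous[OF continuous_on_subset[OF f], rotated]) auto
  then obtain d where d: "d > 0"
    "\<And>z z'. z \<in> N \<times> U \<Longrightarrow> z' \<in> N \<times> U \<Longrightarrow> dist z' z < d
       \<Longrightarrow> dist ((\<lambda>(x, u). f x u) z') ((\<lambda>(x, u). f x u) z) < e"
    unfolding uniformly_continuous_on_def using \<open>e > 0\<close> by metis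
  show ?thesis
  proof (rule that[of "min d 1"])
    fix y c u assume yc: "c \<in> C" "u \<in> U" "dist y c < min d 1"
    have "c \<in> N" "y \<in> N"
      using yc infdist_le[of c C y] by (auto simp: N_def)
    then show "dist (f y u) (f c u) < e"
      using d(2)[of "(c, u)" "(y, u)"] yc by (simp add: dist_Pair_Pair)
  qed (use d in auto)
qed (rule that[of 1], auto)

lemma traj_near_reach:
  fixes f :: "'a::heine_borel \<Rightarrow> 'b::metric_space \<Rightarrow> 'a"
  assumes f: "continuous_on UNIV (\<lambda>(x, u). f x u)" and U: "compact U" "U \<noteq> {}"
    and C: "compact C" and "e > 0"
  shows "\<exists>d>0. \<forall>y c \<pi>. c \<in> C \<longrightarrow> dist y c < d \<longrightarrow> (\<forall>i. \<pi> i \<in> U) \<longrightarrow>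
           (\<exists>z\<in>reach f U C j. dist (traj f y \<pi> j) z < e)"
  using \<open>e > 0\<close>
proof (induction j arbitrary: e)
  case 0
  have "c \<in> reach f U C 0" if "c \<in> C" "\<forall>i. \<pi> i \<in> U" for c and \<pi> :: "nat \<Rightarrow> 'b"
    using traj_in_reach[OF that, of f 0] by simp
  then show ?case using 0 by (intro exI[of _ e]) auto
next
  case (Suc j)
  obtain d1 where d1: "d1 > 0"
    "\<And>y c u. c \<in> reach f U C j \<Longrightarrow> u \<in> U \<Longrightarrow> dist y c < d1 \<Longrightarrow> dist (f y u) (f c u) < e"
    using uniformly_continuous_near_compact[OF f compact_reach[OF f U C] U(1) Suc.prems]
    by metis
  obtain d where d: "d > 0" "\<forall>y c \<pi>. c \<in> C \<longrightarrow> dist y c < d \<longrightarrow> (\<forall>i. \<pi> i \<in> U) \<longrightarrow>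
           (\<exists>z\<in>reach f U C j. dist (traj f y \<pi> j) z < d1)"
    using Suc.IH[OF d1(1)] by blast
  show ?case
  proof (intro exI[of _ d] conjI allI impI)
    fix y c and \<pi> :: "nat \<Rightarrow> 'b" assume "c \<in> C" "dist y c < d" and \<pi>: "\<forall>i. \<pi> i \<in> U"
    then obtain z where z: "z \<in> reach f U C j" "dist (traj f y \<pi> j) z < d1"
      using d(2) by blast
    then have "f z (\<pi> j) \<in> reach f U C (Suc j)" unfolding reach_Suc using \<pi> by force
    moreover have "dist (traj f y \<pi> (Suc j)) (f z (\<pi> j)) < e"
      using d1(2)[OF z(1) _ z(2)] \<pi> by simp
    ultimately show "\<exists>z\<in>reach f U C (Suc j). dist (traj f y \<pi> (Suc j)) z < e" by blast
  qed (use d in auto)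
qed

lemma infdist_le_hausd:
  assumes "compact Y" "y \<in> Y"
  shows "infdist y X \<le> hausd Y X"
proof -
  have "bdd_above ((\<lambda>y. infdist y X) ` Y)"
    using assms by (intro bounded_imp_bdd_above compact_imp_bounded compact_continuous_image
        continuous_intros)
  then have "infdist y X \<le> (SUP y\<in>Y. infdist y X)" using assms(2) by (rule cSUP_upper2) simp
  then show ?thesis unfolding hausd_def by simp
qed

lemma eventually_reach_near_reach:
  fixes f :: "'a::heine_borel \<Rightarrow> 'b::metric_space \<Rightarrow> 'a"
  assumes f: "continuous_on UNIV (\<lambda>(x, u). f x u)" and U: "compact U" "U \<noteq> {}"
    and X: "compact X" "X \<noteq> {}" and Xs: "\<And>n. compact (Xs n)"
    and conv: "(\<lambda>n. hausd (Xs n) X) \<longlonglongrightarrow> 0" and "e > 0"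
  shows "\<forall>\<^sub>F n in sequentially. \<forall>z\<in>reach f U (Xs n) j. \<exists>c\<in>reach f U X j. dist z c < e"
proof -
  obtain d where d: "d > 0" "\<forall>y x \<pi>. x \<in> X \<longrightarrow> dist y x < d \<longrightarrow> (\<forall>i. \<pi> i \<in> U) \<longrightarrow>
           (\<exists>c\<in>reach f U X j. dist (traj f y \<pi> j) c < e)"
    using traj_near_reach[OF f U X(1) \<open>e > 0\<close>] by blast
  have "\<forall>\<^sub>F n in sequentially. hausd (Xs n) X < d"
    using conv d(1) by (rule order_tendstoD(2))
  then show ?thesis
  proof (rule eventually_mono)
    fix n assume n: "hausd (Xs n) X < d"
    show "\<forall>z\<in>reach f U (Xs n) j. \<exists>c\<in>reach f U X j. dist z c < e"
    proof
      fix z assume "z \<in> reach f U (Xs n) j"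
      then obtain y \<pi> where z: "z = traj f y \<pi> j" "y \<in> Xs n" "\<forall>i. \<pi> i \<in> U"
        unfolding reach_def by blast
      obtain x where "x \<in> X" "infdist y X = dist y x"
        using infdist_attains_inf[OF compact_imp_closed[OF X(1)] X(2)] by blast
      moreover have "infdist y X < d"
        using infdist_le_hausd[OF Xs z(2), of X] n by linarith
      ultimately show "\<exists>c\<in>reach f U X j. dist z c < e" using d(2) z by auto
    qed
  qed
qed

lemma locally_lp_stabilizableD:
  assumes "locally_lp_stabilizable f U A r M p lam"
  shows "r > 0" "M \<ge> 1" "p > 0" "summable (\<lambda>k. lam r k powr p)"
    and "\<And>k. lam r k \<ge> 0"
    and "\<And>s k. 0 \<le> s \<Longrightarrow> s \<le> r \<Longrightarrow> lam s k \<le> lam r k"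
    and "\<And>x. infdist x A \<le> r \<Longrightarrow> \<exists>\<pi>. (\<forall>j. \<pi> j \<in> U) \<and>
           (\<forall>k. infdist (traj f x \<pi> k) A \<le> M * lam (infdist x A) k)"
  using assms unfolding locally_lp_stabilizable_def mono_on_def by auto

lemma locally_lp_stabilizable_rate_tendsto_0:
  assumes "locally_lp_stabilizable f U A r M p lam"
  shows "(\<lambda>k. lam r k) \<longlonglongrightarrow> 0"
proof -
  note st = locally_lp_stabilizableD[OF assms]
  have "(\<lambda>k. (lam r k powr p) powr (1/p)) \<longlonglongrightarrow> 0 powr (1/p)"
    using st(3) by (intro tendsto_powr2 summable_LIMSEQ_zero[OF st(4)]) auto
  moreover have "(lam r k powr p) powr (1/p) = lam r k" for k
    using st(3,5) by (simp add: powr_powr)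
  ultimately show ?thesis using st(3) by simp
qed

lemma infdist_traj_gt_if_notin_DA:
  assumes st: "locally_lp_stabilizable f U A r M p lam"
    and x: "x \<notin> DA f U A" and \<pi>: "\<forall>i. \<pi> i \<in> U"
  shows "r < infdist (traj f x \<pi> j) A"
proof (rule ccontr)
  define z where "z = traj f x \<pi> j"
  assume "\<not> r < infdist (traj f x \<pi> j) A"
  then have zr: "infdist z A \<le> r" unfolding z_def by simp
  obtain \<sigma> where \<sigma>: "\<forall>i. \<sigma> i \<in> U" "\<And>k. infdist (traj f z \<sigma> k) A \<le> M * lam (infdist z A) k"
    using locally_lp_stabilizableD(7)[OF st zr] by blast
  have "M \<ge> 0" using locally_lp_stabilizableD(2)[OF st] by simp
  have lam_le: "lam (infdist z A) k \<le> lam r k" for k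
    using locally_lp_stabilizableD(6)[OF st infdist_nonneg zr] .
  define \<pi>' where "\<pi>' = (\<lambda>k. if k < j then \<pi> k else \<sigma> (k - j))"
  have \<pi>': "\<forall>i. \<pi>' i \<in> U" using \<pi> \<sigma>(1) unfolding \<pi>'_def by simp
  have shift: "traj f x \<pi>' (k + j) = traj f z \<sigma> k" for k
  proof -
    have "traj f x \<pi>' j = z" unfolding z_def by (rule traj_cong) (simp add: \<pi>'_def)
    moreover have "(\<lambda>i. \<pi>' (j + i)) = \<sigma>" by (simp add: \<pi>'_def)
    ultimately show ?thesis using traj_add[of f x \<pi>' j k] by (simp add: add.commute)
  qed
  have bound: "infdist (traj f x \<pi>' (k + j)) A \<le> M * lam r k" for k
    unfolding shift using order_trans[OF \<sigma>(2) mult_left_mono[OF lam_le \<open>M \<ge> 0\<close>]] .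
  have "(\<lambda>k. M * lam r k) \<longlonglongrightarrow> 0"
    using tendsto_mult_right_zero[OF locally_lp_stabilizable_rate_tendsto_0[OF st]] .
  then have "(\<lambda>k. infdist (traj f x \<pi>' (k + j)) A) \<longlonglongrightarrow> 0"
    by (rule tendsto_sandwich[OF always_eventually always_eventually tendsto_const, rotated 2])
       (use bound infdist_nonneg in auto)
  then have "(\<lambda>k. infdist (traj f x \<pi>' k) A) \<longlonglongrightarrow> 0" by (rule LIMSEQ_offset)
  then have "x \<in> DA f U A" unfolding DA_def using \<pi>' by blast
  with x show False ..
qed

lemma infdist_reach_gt_if_disjoint_DA:
  assumes st: "locally_lp_stabilizable f U A r M p lam"
    and X: "X \<inter> DA f U A = {}" and c: "c \<in> reach f U X j"
  shows "r < infdist c A"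
proof -
  obtain x \<pi> where c: "c = traj f x \<pi> j" and "x \<in> X" and \<pi>: "\<forall>i. \<pi> i \<in> U"
    using c unfolding reach_def by blast
  then have "x \<notin> DA f U A" using X by blast
  then show ?thesis unfolding c by (rule infdist_traj_gt_if_notin_DA[OF st _ \<pi>])
qed

lemma Psi_ge_if_infdist_ge:
  assumes "Z \<noteq> {}" "alo \<ge> 0" "q \<ge> 0" "0 \<le> \<rho>"
    and \<alpha>: "\<And>x. alo * infdist x A powr q \<le> \<alpha> x"
    and Z: "\<And>z. z \<in> Z \<Longrightarrow> \<rho> \<le> infdist z A"
  shows "alo * \<rho> powr q \<le> Psi \<alpha> Z"
  unfolding Psi_def
proof (rule cINF_greatest[OF \<open>Z \<noteq> {}\<close>])
  fix z assume "z \<in> Z"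
  then have "\<rho> powr q \<le> infdist z A powr q"
    by (rule powr_mono2[OF \<open>q \<ge> 0\<close> \<open>0 \<le> \<rho>\<close> Z])
  then have "alo * \<rho> powr q \<le> alo * infdist z A powr q"
    using \<open>alo \<ge> 0\<close> by (rule mult_left_mono)
  then show "alo * \<rho> powr q \<le> \<alpha> z" using \<alpha>[of z] by linarith
qed

lemma suminf_ennreal_tendsto_top:
  fixes g :: "'i \<Rightarrow> nat \<Rightarrow> real"
  assumes "c > 0" and ev: "\<And>j. \<forall>\<^sub>F n in F. c \<le> g n j"
  shows "((\<lambda>n. \<Sum>j. ennreal (g n j)) \<longlongrightarrow> \<infinity>) F"
proof (rule order_tendstoI)
  fix a :: ennreal assume "a < \<infinity>"
  then obtain t where t: "a = ennreal t" "t \<ge> 0" by (cases a) auto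
  obtain K :: nat where K: "t < real K * c"
    using reals_Archimedean2[of "t / c"] \<open>c > 0\<close> by (auto simp: field_simps)
  have "\<forall>\<^sub>F n in F. \<forall>j\<in>{..<K}. c \<le> g n j"
    using ev by (intro eventually_ball_finite) auto
  then show "\<forall>\<^sub>F n in F. a < (\<Sum>j. ennreal (g n j))"
  proof (rule eventually_mono)
    fix n assume gc: "\<forall>j\<in>{..<K}. c \<le> g n j"
    have "a < ennreal (real K * c)"
      unfolding t(1) using K t(2) by (intro ennreal_lessI) auto
    also have "\<dots> = (\<Sum>j<K. ennreal c)"
      using \<open>c > 0\<close> by (simp add: ennreal_of_nat_eq_real_of_nat ennreal_mult')
    also have "\<dots> \<le> (\<Sum>j<K. ennreal (g n j))"
      using gc by (intro sum_mono ennreal_leI) auto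
    also have "\<dots> \<le> (\<Sum>j. ennreal (g n j))"
      by (intro sum_le_suminf summableI) auto
    finally show "a < (\<Sum>j. ennreal (g n j))" .
  qed
qed (simp only: infinity_ennreal_def top.extremum_strict)

theorem theorem8:
  fixes f :: "'a::{real_normed_vector,heine_borel} \<Rightarrow> 'b::euclidean_space \<Rightarrow> 'a"
    and U :: "'b set" and A :: "'a set"
    and r M p :: real and lam :: "real \<Rightarrow> nat \<Rightarrow> real"
    and \<alpha> :: "'a \<Rightarrow> real" and alo ahi pbar :: real
    and X :: "'a set" and Xs :: "nat \<Rightarrow> 'a set"
  assumes f_cont: "continuous_on UNIV (\<lambda>(x, u). f x u)"
    and U: "compact U" "U \<noteq> {}"
    and A: "compact A" "A \<noteq> {}" "controlled_invariant f U A"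
    and stab: "locally_lp_stabilizable f U A r M p lam"
    and \<alpha>_cont: "continuous_on UNIV \<alpha>"
    and \<alpha>_nonneg: "\<forall>x. \<alpha> x \<ge> 0"
    and \<alpha>_bounds: "alo > 0" "ahi > 0" "pbar \<ge> p"
      "\<forall>x. alo * infdist x A powr pbar \<le> \<alpha> x \<and> \<alpha> x \<le> ahi * infdist x A powr pbar"
    and X: "compact X" "X \<noteq> {}" "X \<inter> DA f U A = {}"
    and Xs: "\<forall>k. compact (Xs k) \<and> Xs k \<noteq> {}"
    and conv: "(\<lambda>k. hausd (Xs k) X) \<longlonglongrightarrow> 0"
  shows "(\<lambda>k. Vfun \<alpha> f U (Xs k)) \<longlonglongrightarrow> \<infinity>"
proof -
  have "r > 0" "p > 0" using locally_lp_stabilizableD(1,3)[OF stab] .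
  have Xs_compact: "\<And>n. compact (Xs n)" and Xs_ne: "\<And>n. Xs n \<noteq> {}" using Xs by blast+
  have \<alpha>_lower: "\<And>x. alo * infdist x A powr pbar \<le> \<alpha> x" using \<alpha>_bounds(4) by blast
  have "\<forall>\<^sub>F n in sequentially. alo * (r/2) powr pbar \<le> Psi \<alpha> (reach f U (Xs n) j)" for j
    using eventually_reach_near_reach[OF f_cont U X(1,2) Xs_compact conv half_gt_zero[OF \<open>r > 0\<close>]]
  proof (rule eventually_mono)
    fix n assume near: "\<forall>z\<in>reach f U (Xs n) j. \<exists>c\<in>reach f U X j. dist z c < r/2"
    have "r/2 \<le> infdist z A" if z: "z \<in> reach f U (Xs n) j" for z
    proof -
      obtain c where c: "c \<in> reach f U X j" "dist z c < r/2" using near z by blast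
      have "r < infdist c A" by (rule infdist_reach_gt_if_disjoint_DA[OF stab X(3) c(1)])
      then show ?thesis using c(2) infdist_triangle[of c A z] by (simp add: dist_commute)
    qed
    moreover have "reach f U (Xs n) j \<noteq> {}" using reach_ne[OF U(2) Xs_ne] .
    ultimately show "alo * (r/2) powr pbar \<le> Psi \<alpha> (reach f U (Xs n) j)"
      using \<alpha>_bounds(1,3) \<open>r > 0\<close> \<open>p > 0\<close>
      by (intro Psi_ge_if_infdist_ge[OF _ _ _ _ \<alpha>_lower]) auto
  qed
  moreover have "alo * (r/2) powr pbar > 0" using \<alpha>_bounds(1) \<open>r > 0\<close> by simp
  ultimately show ?thesis
    unfolding Vfun_def by (rule suminf_ennreal_tendsto_top[rotated])
qed

end
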